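(* Let $X\in\mathbb{R}^{m\times n}$, $\mathbf y,\mathbf z\in\mathbb{R}^m$ and $\gamma>0$, and let $A,B,C$ be the symmetric $(n+2)\times(n+2)$ matrices defined in the context. Then the optimal value of the problem $$\inf_{\mathbf w\in\mathbb{R}^n}\ \frac{\left\|\frac{1}{\gamma}\mathbf z\,\mathbf w^T\mathbf w+X\mathbf w-\mathbf y-\frac{1}{\gamma}(\mathbf w^T\mathbf w)\,\mathbf y\right\|^2}{\left(1+\frac{1}{\gamma}\mathbf w^T\mathbf w\right)^2}$$ is equal to the optimal value of the semidefinite program $$\sup_{\mu\in\mathbb{R},\,\lambda\in\mathbb{R}}\ \mu\quad\text{s.t.}\quad A-\mu B+\lambda C\succeq 0 .$$
   Context: Notation: $\|\cdot\|$ is the Euclidean norm, $I_n$ the $n\times n$ identity, $\mathbf 0_n$ the $n\times n$ zero matrix, $M\succeq 0$ means $M$ is symmetric positive semidefinite. Define, in block form with blocks of sizes $n,1,1$, $$A=\begin{pmatrix} X^TX & X^T(\mathbf z-\mathbf y) & -X^T\mathbf y\\ (\mathbf z-\mathbf y)^TX & \|\mathbf z-\mathbf y\|^2 & -(\mathbf z-\mathbf y)^T\mathbf y\\ -\mathbf y^TX & -\mathbf y^T(\mathbf z-\mathbf y) & \mathbf y^T\mathbf y\end{pmatrix},\quad B=\begin{pmatrix}\mathbf 0_n&0&0\\0&1&1\\0&1&1\end{pmatrix},\quad C=\begin{pmatrix}\frac1\gamma I_n&0&0\\0&0&-\frac12\\0&-\frac12&0\end{pmatrix}.$$ *)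

theory Defs
  imports "HOL-Analysis.Analysis" "HOL-Library.Extended_Real"
begin

text \<open>Index type for (n+2)x(n+2) block matrices: Inl i (i in the n-block),
  Inr (Inl ()) the first extra index, Inr (Inr ()) the second extra index.\<close>
type_synonym ('n) ext2 = "'n + (unit + unit)"

definition psd :: "real ^ 'k ^ 'k \<Rightarrow> bool" where
  "psd M \<longleftrightarrow> transpose M = M \<and> (\<forall>x. 0 \<le> x \<bullet> (M *v x))"

definition matA :: "real ^ 'n ^ 'm \<Rightarrow> real ^ 'm \<Rightarrow> real ^ 'm \<Rightarrow> real ^ ('n ext2) ^ ('n ext2)" where
  "matA X y z = (\<chi> p q. case (p, q) of
      (Inl i, Inl j) \<Rightarrow> (transpose X ** X) $ i $ j
    | (Inl i, Inr (Inl _)) \<Rightarrow> (transpose X *v (z - y)) $ i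
    | (Inl i, Inr (Inr _)) \<Rightarrow> - (transpose X *v y) $ i
    | (Inr (Inl _), Inl j) \<Rightarrow> ((z - y) v* X) $ j
    | (Inr (Inl _), Inr (Inl _)) \<Rightarrow> (norm (z - y))^2
    | (Inr (Inl _), Inr (Inr _)) \<Rightarrow> - ((z - y) \<bullet> y)
    | (Inr (Inr _), Inl j) \<Rightarrow> - (y v* X) $ j
    | (Inr (Inr _), Inr (Inl _)) \<Rightarrow> - (y \<bullet> (z - y))
    | (Inr (Inr _), Inr (Inr _)) \<Rightarrow> y \<bullet> y)"

definition matB :: "real ^ (('n::finite) ext2) ^ ('n ext2)" where
  "matB = (\<chi> p q. case (p, q) of
      (Inr _, Inr _) \<Rightarrow> 1
    | _ \<Rightarrow> 0)"

definition matC :: "real \<Rightarrow> real ^ (('n::finite) ext2) ^ ('n ext2)" where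
  "matC \<gamma> = (\<chi> p q. case (p, q) of
      (Inl i, Inl j) \<Rightarrow> (if i = j then 1 / \<gamma> else 0)
    | (Inr (Inl _), Inr (Inr _)) \<Rightarrow> - 1 / 2
    | (Inr (Inr _), Inr (Inl _)) \<Rightarrow> - 1 / 2
    | _ \<Rightarrow> 0)"

definition objective :: "real ^ 'n ^ 'm \<Rightarrow> real ^ 'm \<Rightarrow> real ^ 'm \<Rightarrow> real \<Rightarrow> real ^ 'n \<Rightarrow> real" where
  "objective X y z \<gamma> w =
     (norm (((1 / \<gamma>) * (w \<bullet> w)) *\<^sub>R z + X *v w - y - ((1 / \<gamma>) * (w \<bullet> w)) *\<^sub>R y))^2
     / (1 + (1 / \<gamma>) * (w \<bullet> w))^2"

end

theory Submission
  imports Defs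
begin

text \<open>Write \<open>v = (w, a, b)\<close> for vectors indexed by \<open>'n ext2\<close>. The quadratic forms of the
  three matrices are \<open>\<parallel>X w + a (z - y) - b y\<parallel>\<^sup>2\<close>, \<open>(a + b)\<^sup>2\<close> and \<open>w\<bullet>w/\<gamma> - a b\<close>, and on
  \<open>(w, w\<bullet>w/\<gamma>, 1)\<close> the ratio of the first two is the objective. Weak duality is evaluation of
  the dual constraint at this vector. Conversely, if \<open>\<mu>\<close> is the infimum of the objective, the
  form of \<open>A - \<mu> B\<close> is nonnegative on the null cone of the indefinite form of \<open>C\<close>: off the
  hyperplane \<open>b = 0\<close> by homogeneity, and on it by continuity. The S-lemma for an equality
  constraint then produces the multiplier \<open>\<lambda>\<close>.\<close>

definition quad_form :: "real ^ 'k ^ 'k \<Rightarrow> real ^ 'k \<Rightarrow> real" where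
  "quad_form M v = v \<bullet> (M *v v)"

definition quadratic :: "('a::real_vector \<Rightarrow> real) \<Rightarrow> bool" where
  "quadratic F \<longleftrightarrow> (\<forall>x y s t. F (s *\<^sub>R x + t *\<^sub>R y)
      = s\<^sup>2 * F x + s * t * (F (x + y) - F x - F y) + t\<^sup>2 * F y)"

lemma quadratic_quad_form: "quadratic (quad_form M)"
  unfolding quadratic_def quad_form_def
  by (simp add: matrix_vector_right_distrib matrix_vector_mult_scaleR inner_add_left
      inner_add_right algebra_simps power2_eq_square)

lemma quad_form_scaleR: "quad_form M (c *\<^sub>R v) = c\<^sup>2 * quad_form M v"
  unfolding quad_form_def by (simp add: matrix_vector_mult_scaleR power2_eq_square)

lemma quad_form_diff_add:
  "quad_form (A - m *\<^sub>R B + l *\<^sub>R C) v = quad_form A v - m * quad_form B v + l * quad_form C v"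
  unfolding quad_form_def
  by (simp add: matrix_vector_mult_add_rdistrib matrix_vector_mult_diff_rdistrib
      inner_add_right inner_diff_right flip: scaleR_matrix_vector_assoc)

lemma psd_iff_quad_form:
  "transpose M = M \<Longrightarrow> psd M \<longleftrightarrow> (\<forall>v. 0 \<le> quad_form M v)"
  by (simp add: psd_def quad_form_def)

lemma transpose_diff_add:
  fixes A B C :: "real ^ 'k ^ 'k"
  shows "transpose (A - m *\<^sub>R B + l *\<^sub>R C) = transpose A - m *\<^sub>R transpose B + l *\<^sub>R transpose C"
  by (simp add: vec_eq_iff transpose_def)

section \<open>The S-lemma\<close>

text \<open>The two roots of \<open>r\<^sup>2 G\<^sub>x + r B + G\<^sub>y\<close> have opposite signs and product \<open>G\<^sub>y / G\<^sub>x\<close>; the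
  combination of the two inequalities at the roots that cancels the linear term is the claim.\<close>

lemma cross_le_of_nonneg_at_roots:
  fixes Gx Gy B Fx Fy C :: real
  assumes Gx: "Gx > 0" and Gy: "Gy < 0"
    and nonneg: "\<And>r. r\<^sup>2 * Gx + r * B + Gy = 0 \<Longrightarrow> 0 \<le> r\<^sup>2 * Fx + r * C + Fy"
  shows "Fx * Gy \<le> Fy * Gx"
proof -
  define D where "D = B\<^sup>2 - 4 * Gx * Gy"
  have "Gx * Gy < 0" using Gx Gy by (simp add: mult_pos_neg)
  hence D: "D > B\<^sup>2" unfolding D_def by linarith
  define s where "s = sqrt D"
  have "0 \<le> D"
    using D zero_le_power2[of B] by linarith
  then have s2: "s\<^sup>2 = D"
    unfolding s_def by simp
  have s_gt: "s > \<bar>B\<bar>"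
    unfolding s_def using D real_less_rsqrt
    by (simp add: abs_le_square_iff real_sqrt_abs[symmetric] del: real_sqrt_abs)
  define r1 where "r1 = (- B + s) / (2 * Gx)"
  define r2 where "r2 = (- B - s) / (2 * Gx)"
  have r1: "r1 > 0" unfolding r1_def using s_gt Gx by (simp add: divide_pos_pos)
  have r2: "r2 < 0" unfolding r2_def using s_gt Gx by (simp add: divide_neg_pos)
  have "r1\<^sup>2 * Gx + r1 * B + Gy = 0" "r2\<^sup>2 * Gx + r2 * B + Gy = 0" and prod: "r1 * r2 * Gx = Gy"
    unfolding r1_def r2_def using Gx s2 unfolding D_def
    by (simp_all add: field_simps power2_eq_square) algebra+
  then have p1: "0 \<le> r1\<^sup>2 * Fx + r1 * C + Fy" and p2: "0 \<le> r2\<^sup>2 * Fx + r2 * C + Fy"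
    using nonneg by blast+
  have "0 \<le> r1 * (r2\<^sup>2 * Fx + r2 * C + Fy) + (- r2) * (r1\<^sup>2 * Fx + r1 * C + Fy)"
    using r1 r2 by (intro add_nonneg_nonneg mult_nonneg_nonneg p1 p2) auto
  also have "\<dots> = (r1 - r2) * (Fy - r1 * r2 * Fx)"
    by (simp add: algebra_simps power2_eq_square)
  finally have "r1 * r2 * Fx \<le> Fy"
    using r1 r2 by (simp add: zero_le_mult_iff)
  hence "r1 * r2 * Fx * Gx \<le> Fy * Gx" using Gx by (simp add: mult_right_mono)
  thus ?thesis using prod by (simp add: algebra_simps)
qed

text \<open>The multiplier is the supremum of \<open>-F x / G x\<close> over \<open>G x > 0\<close>, which is bounded by every
  \<open>-F y / G y\<close> with \<open>G y < 0\<close>.\<close>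

lemma S_lemma_equality:
  fixes F G :: "'a::real_vector \<Rightarrow> real"
  assumes F: "quadratic F" and G: "quadratic G"
    and pos: "G x0 > 0" and neg: "G y0 < 0" and null: "\<And>v. G v = 0 \<Longrightarrow> 0 \<le> F v"
  shows "\<exists>l. \<forall>v. 0 \<le> F v + l * G v"
proof -
  have ratio_le: "- F x / G x \<le> - F y / G y" if "G x > 0" "G y < 0" for x y
  proof -
    have "F x * G y \<le> F y * G x"
    proof (rule cross_le_of_nonneg_at_roots[OF that])
      fix r assume "r\<^sup>2 * G x + r * (G (x + y) - G x - G y) + G y = 0"
      hence "G (r *\<^sub>R x + 1 *\<^sub>R y) = 0"
        using G[unfolded quadratic_def, rule_format, of r x 1 y] by simp
      thus "0 \<le> r\<^sup>2 * F x + r * (F (x + y) - F x - F y) + F y"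
        using null F[unfolded quadratic_def, rule_format, of r x 1 y] by fastforce
    qed
    thus ?thesis using that by (simp add: divide_simps)
  qed
  define S where "S = {- F x / G x | x. G x > 0}"
  have "S \<noteq> {}" unfolding S_def using pos by blast
  have "bdd_above S" unfolding S_def
    by (rule bdd_aboveI[of _ "- F y0 / G y0"]) (use ratio_le[OF _ neg] in auto)
  have "0 \<le> F v + Sup S * G v" for v
  proof (cases "G v" "0 :: real" rule: linorder_cases)
    case less
    have "Sup S \<le> - F v / G v"
      using \<open>S \<noteq> {}\<close> by (rule cSup_least) (use ratio_le[OF _ less] in \<open>auto simp: S_def\<close>)
    thus ?thesis using less by (simp add: divide_simps)
  next
    case equal
    thus ?thesis using null by simp
  next
    case greater
    hence "- F v / G v \<le> Sup S"
      using \<open>bdd_above S\<close> by (auto intro!: cSup_upper simp: S_def)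
    thus ?thesis using greater by (simp add: divide_simps)
  qed
  thus ?thesis by blast
qed

definition block_vec :: "real ^ 'n \<Rightarrow> real \<Rightarrow> real \<Rightarrow> real ^ ('n::finite) ext2" where
  "block_vec w a b = (\<chi> p. case p of Inl i \<Rightarrow> w $ i | Inr (Inl _) \<Rightarrow> a | Inr (Inr _) \<Rightarrow> b)"

lemma block_vec_nth [simp]:
  "block_vec w a b $ Inl i = w $ i"
  "block_vec w a b $ Inr (Inl u) = a"
  "block_vec w a b $ Inr (Inr u) = b"
  by (simp_all add: block_vec_def)

lemma block_vec_cases:
  obtains w a b where "v = block_vec w a b"
proof
  show "v = block_vec (\<chi> i. v $ Inl i) (v $ Inr (Inl ())) (v $ Inr (Inr ()))"
    by (auto simp: vec_eq_iff block_vec_def split: sum.split)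
qed

lemma scaleR_block_vec: "c *\<^sub>R block_vec w a b = block_vec (c *\<^sub>R w) (c * a) (c * b)"
  by (auto simp: vec_eq_iff block_vec_def split: sum.split)

lemma sum_UNIV_ext2:
  fixes f :: "('n::finite) ext2 \<Rightarrow> 'a::comm_monoid_add"
  shows "(\<Sum>q\<in>UNIV. f q) = (\<Sum>i\<in>UNIV. f (Inl i)) + f (Inr (Inl ())) + f (Inr (Inr ()))"
proof -
  have "(\<Sum>q\<in>UNIV. f q) = (\<Sum>q\<in>UNIV <+> UNIV. f q)" by simp
  also have "\<dots> = (\<Sum>i\<in>UNIV. f (Inl i)) + (\<Sum>q\<in>UNIV <+> UNIV. f (Inr q))"
    by (subst sum.Plus) (auto simp: o_def)
  also have "(\<Sum>q\<in>UNIV <+> UNIV. f (Inr q)) = f (Inr (Inl ())) + f (Inr (Inr ()))"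
    by (subst sum.Plus) (auto simp: o_def UNIV_unit)
  finally show ?thesis by (simp add: add.assoc)
qed

lemma matrix_vector_mult_block_vec:
  "(M *v block_vec w a b) $ p
     = (\<Sum>i\<in>UNIV. M $ p $ Inl i * w $ i) + M $ p $ Inr (Inl ()) * a + M $ p $ Inr (Inr ()) * b"
  unfolding matrix_vector_mult_def by (simp add: sum_UNIV_ext2[where f="\<lambda>q. M $ p $ q * _ $ q"])

lemma quad_form_block_vec:
  "quad_form M (block_vec w a b) = (\<Sum>i\<in>UNIV. w $ i * (M *v block_vec w a b) $ Inl i)
     + a * (M *v block_vec w a b) $ Inr (Inl ()) + b * (M *v block_vec w a b) $ Inr (Inr ())"
  unfolding quad_form_def inner_vec_def by (simp add: sum_UNIV_ext2)

lemma sum_vector_matrix_mult_nth: "(\<Sum>j\<in>UNIV. (u v* X) $ j * w $ j) = u \<bullet> (X *v w)"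
proof -
  have "(\<Sum>j\<in>UNIV. (u v* X) $ j * w $ j) = (u v* X) \<bullet> w"
    by (simp only: inner_vec_def inner_real_def)
  then show ?thesis by (simp only: dot_lmul_matrix)
qed

lemma matA_mult_block_vec:
  fixes X :: "real ^ 'n ^ 'm" and y z :: "real ^ 'm" and w :: "real ^ 'n" and a b :: real
  defines "r \<equiv> X *v w + a *\<^sub>R (z - y) - b *\<^sub>R y"
  shows "(matA X y z *v block_vec w a b) $ Inl i = (r v* X) $ i"
    and "(matA X y z *v block_vec w a b) $ Inr (Inl ()) = (z - y) \<bullet> r"
    and "(matA X y z *v block_vec w a b) $ Inr (Inr ()) = - (y \<bullet> r)"
proof -
  have "(\<Sum>j\<in>UNIV. (transpose X ** X) $ i $ j * w $ j) = ((transpose X ** X) *v w) $ i"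
    by (simp add: matrix_vector_mult_def)
  also have "\<dots> = ((X *v w) v* X) $ i"
    by (simp flip: matrix_vector_mul_assoc)
  finally show "(matA X y z *v block_vec w a b) $ Inl i = (r v* X) $ i"
    by (simp add: matrix_vector_mult_block_vec matA_def r_def vector_matrix_left_distrib
        vector_matrix_mult_diff_distrib scaleR_vector_matrix_assoc)
  show "(matA X y z *v block_vec w a b) $ Inr (Inl ()) = (z - y) \<bullet> r"
    by (simp add: matrix_vector_mult_block_vec matA_def r_def sum_vector_matrix_mult_nth
        inner_add_right inner_diff_right power2_norm_eq_inner)
  have "(\<Sum>i\<in>UNIV. w $ i * (y v* X) $ i) = y \<bullet> (X *v w)"
    using sum_vector_matrix_mult_nth[of y X w] by (simp add: mult.commute)
  then show "(matA X y z *v block_vec w a b) $ Inr (Inr ()) = - (y \<bullet> r)"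
    by (simp add: matrix_vector_mult_block_vec matA_def r_def inner_add_right
        inner_diff_right inner_commute algebra_simps sum_negf)
qed

lemma quad_form_matA:
  "quad_form (matA X y z) (block_vec w a b) = (norm (X *v w + a *\<^sub>R (z - y) - b *\<^sub>R y))\<^sup>2"
proof -
  define r where "r = X *v w + a *\<^sub>R (z - y) - b *\<^sub>R y"
  have "(\<Sum>i\<in>UNIV. w $ i * (r v* X) $ i) = r \<bullet> (X *v w)"
    using sum_vector_matrix_mult_nth[of r X w] by (simp add: mult.commute)
  then have "quad_form (matA X y z) (block_vec w a b) = r \<bullet> (X *v w) + a * ((z - y) \<bullet> r) - b * (y \<bullet> r)"
    by (simp add: quad_form_block_vec matA_mult_block_vec flip: r_def)
  also have "\<dots> = r \<bullet> r"
    by (simp add: r_def inner_add_right inner_diff_right inner_add_left inner_diff_left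
        inner_commute algebra_simps)
  finally show ?thesis by (simp add: r_def power2_norm_eq_inner)
qed

lemma quad_form_matB: "quad_form matB (block_vec w a b) = (a + b)\<^sup>2"
  by (simp add: quad_form_block_vec matrix_vector_mult_block_vec matB_def power2_eq_square
      algebra_simps)

lemma quad_form_matC: "quad_form (matC \<gamma>) (block_vec w a b) = (w \<bullet> w) / \<gamma> - a * b"
proof -
  have "(\<Sum>j\<in>UNIV. (if i = j then 1 / \<gamma> else 0) * w $ j) = w $ i / \<gamma>" for i
  proof -
    have "(if i = j then 1 / \<gamma> else 0) * w $ j = (if i = j then w $ i / \<gamma> else 0)" for j
      by auto
    then show ?thesis by simp
  qed
  then show ?thesis
    by (simp add: quad_form_block_vec matrix_vector_mult_block_vec matC_def inner_vec_def
        sum_divide_distrib algebra_simps)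
qed

lemma quad_form_matA_matB:
  "quad_form (matA X y z - \<mu> *\<^sub>R matB) (block_vec w a b)
     = (norm (X *v w + a *\<^sub>R (z - y) - b *\<^sub>R y))\<^sup>2 - \<mu> * (a + b)\<^sup>2"
  using quad_form_diff_add[of "matA X y z" \<mu> matB 0] by (simp add: quad_form_matA quad_form_matB)

lemma transpose_matA: "transpose (matA X y z) = matA X y z"
  by (auto simp: vec_eq_iff transpose_def matA_def matrix_matrix_mult_def mult.commute
      inner_commute matrix_vector_mult_def vector_matrix_mult_def split: sum.split)

lemma transpose_matB: "transpose matB = matB"
  by (auto simp: vec_eq_iff transpose_def matB_def split: sum.split)

lemma transpose_matC: "transpose (matC \<gamma>) = matC \<gamma>"
  by (auto simp: vec_eq_iff transpose_def matC_def split: sum.split)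

lemma psd_dual_constraint_iff:
  "psd (matA X y z - \<mu> *\<^sub>R matB + l *\<^sub>R matC \<gamma>)
     \<longleftrightarrow> (\<forall>v. 0 \<le> quad_form (matA X y z - \<mu> *\<^sub>R matB) v + l * quad_form (matC \<gamma>) v)"
  using quad_form_diff_add[of "matA X y z" \<mu> matB l "matC \<gamma>"]
    quad_form_diff_add[of "matA X y z" \<mu> matB 0 "matC \<gamma>"]
  by (simp add: psd_iff_quad_form transpose_diff_add transpose_matA transpose_matB transpose_matC)

section \<open>Duality\<close>

lemma objective_eq_quad_form:
  "objective X y z \<gamma> w = quad_form (matA X y z) (block_vec w ((w \<bullet> w) / \<gamma>) 1)
     / (1 + (w \<bullet> w) / \<gamma>)\<^sup>2"
proof -
  have "(1 / \<gamma>) * (w \<bullet> w) = (w \<bullet> w) / \<gamma>"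
    by simp
  moreover have "((w \<bullet> w) / \<gamma>) *\<^sub>R z + X *v w - y - ((w \<bullet> w) / \<gamma>) *\<^sub>R y
      = X *v w + ((w \<bullet> w) / \<gamma>) *\<^sub>R (z - y) - 1 *\<^sub>R y"
    by (simp add: algebra_simps)
  ultimately show ?thesis
    by (simp only: objective_def quad_form_matA)
qed

lemma le_objective_iff:
  assumes "\<gamma> > 0"
  shows "\<mu> \<le> objective X y z \<gamma> w
    \<longleftrightarrow> 0 \<le> quad_form (matA X y z - \<mu> *\<^sub>R matB) (block_vec w ((w \<bullet> w) / \<gamma>) 1)"
proof -
  have "0 \<le> (w \<bullet> w) / \<gamma>"
    using assms by simp
  then have "(1 + (w \<bullet> w) / \<gamma>)\<^sup>2 > 0"
    by (simp add: add_pos_nonneg)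
  then show ?thesis
    by (simp add: objective_eq_quad_form quad_form_matA quad_form_matA_matB pos_le_divide_eq
        add.commute)
qed

lemma dual_feasible_le_objective:
  assumes "\<gamma> > 0" and "psd (matA X y z - \<mu> *\<^sub>R matB + l *\<^sub>R matC \<gamma>)"
  shows "\<mu> \<le> objective X y z \<gamma> w"
  using assms psd_dual_constraint_iff[THEN iffD1, rule_format, of X y z \<mu> l \<gamma>
      "block_vec w ((w \<bullet> w) / \<gamma>) 1"]
  by (simp add: le_objective_iff quad_form_matC)

text \<open>On the null cone with \<open>b \<noteq> 0\<close>, rescaling by \<open>1 / b\<close> lands on a vector of the form
  \<open>(w, w\<bullet>w/\<gamma>, 1)\<close>.\<close>

lemma lower_bound_imp_nonneg_off_hyperplane:
  assumes "\<gamma> > 0" and bound: "\<And>w. \<mu> \<le> objective X y z \<gamma> w"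
    and null: "quad_form (matC \<gamma>) (block_vec w a b) = 0" and "b \<noteq> 0"
  shows "0 \<le> quad_form (matA X y z - \<mu> *\<^sub>R matB) (block_vec w a b)"
proof -
  define w' where "w' = (1 / b) *\<^sub>R w"
  have "w \<bullet> w = \<gamma> * (a * b)"
    using null \<open>\<gamma> > 0\<close> by (simp add: quad_form_matC field_simps)
  hence "(w' \<bullet> w') / \<gamma> = a / b"
    using \<open>\<gamma> > 0\<close> \<open>b \<noteq> 0\<close> by (simp add: w'_def field_simps power2_eq_square)
  moreover have "block_vec w a b = b *\<^sub>R block_vec w' (a / b) 1"
    using \<open>b \<noteq> 0\<close> by (simp add: scaleR_block_vec w'_def)
  ultimately show ?thesis
    using bound[of w'] \<open>\<gamma> > 0\<close> by (simp add: quad_form_scaleR le_objective_iff)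
qed

text \<open>On the hyperplane \<open>b = 0\<close> the null cone is the line \<open>(0, a, 0)\<close>, which is the limit of the
  null vectors \<open>(s e, 1, s\<^sup>2/\<gamma>)\<close> as \<open>s \<rightarrow> 0\<close>.\<close>

lemma lower_bound_imp_nonneg_on_hyperplane:
  fixes X :: "real ^ 'n ^ 'm"
  assumes "\<gamma> > 0" and "\<And>w. \<mu> \<le> objective X y z \<gamma> w"
  shows "0 \<le> quad_form (matA X y z - \<mu> *\<^sub>R matB) (block_vec 0 a 0)"
proof -
  fix i :: 'n
  define e :: "real ^ 'n" where "e = axis i 1"
  define h where "h s = quad_form (matA X y z - \<mu> *\<^sub>R matB) (block_vec (s *\<^sub>R e) 1 (s\<^sup>2 / \<gamma>))"
    for s
  have h: "h s = (norm (s *\<^sub>R (X *v e) + 1 *\<^sub>R (z - y) - (s\<^sup>2 / \<gamma>) *\<^sub>R y))\<^sup>2 - \<mu> * (1 + s\<^sup>2 / \<gamma>)\<^sup>2"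
    for s by (simp add: h_def quad_form_matA_matB matrix_vector_mult_scaleR)
  have "(h \<longlongrightarrow> h 0) (at 0)"
    unfolding h using \<open>\<gamma> > 0\<close> by (intro tendsto_intros) auto
  moreover have "0 \<le> h s" if "s \<noteq> 0" for s
  proof -
    have "quad_form (matC \<gamma>) (block_vec (s *\<^sub>R e) 1 (s\<^sup>2 / \<gamma>)) = 0"
      by (simp add: quad_form_matC e_def inner_axis_axis power2_eq_square)
    then show ?thesis
      unfolding h_def using assms that by (intro lower_bound_imp_nonneg_off_hyperplane) auto
  qed
  then have "\<forall>\<^sub>F s in at 0. 0 \<le> h s"
    by (auto simp: eventually_at_filter)
  ultimately have "0 \<le> h 0"
    by (intro tendsto_lowerbound[of h]) auto
  moreover have "block_vec (0 :: real ^ 'n) a 0 = a *\<^sub>R block_vec 0 1 0"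
    by (simp add: scaleR_block_vec)
  ultimately show ?thesis
    by (simp add: h_def quad_form_scaleR)
qed

lemma lower_bound_imp_nonneg_on_null_cone:
  assumes "\<gamma> > 0" and "\<And>w. \<mu> \<le> objective X y z \<gamma> w"
    and null: "quad_form (matC \<gamma>) v = 0"
  shows "0 \<le> quad_form (matA X y z - \<mu> *\<^sub>R matB) v"
proof -
  obtain w a b where v: "v = block_vec w a b" by (rule block_vec_cases)
  show ?thesis
  proof (cases "b = 0")
    case True
    with null v \<open>\<gamma> > 0\<close> have "w = 0"
      by (simp add: quad_form_matC)
    with True v assms show ?thesis
      by (simp add: lower_bound_imp_nonneg_on_hyperplane)
  next
    case False
    with assms v show ?thesis
      by (simp add: lower_bound_imp_nonneg_off_hyperplane)
  qed
qed

lemma lower_bound_imp_dual_feasible: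
  fixes X :: "real ^ 'n ^ 'm"
  assumes "\<gamma> > 0" and "\<And>w. \<mu> \<le> objective X y z \<gamma> w"
  shows "\<exists>l. psd (matA X y z - \<mu> *\<^sub>R matB + l *\<^sub>R matC \<gamma>)"
  unfolding psd_dual_constraint_iff
proof (rule S_lemma_equality[OF quadratic_quad_form quadratic_quad_form])
  fix i :: 'n
  show "quad_form (matC \<gamma>) (block_vec (axis i 1) 0 0) > 0"
    using \<open>\<gamma> > 0\<close> by (simp add: quad_form_matC inner_axis_axis)
  show "quad_form (matC \<gamma>) (block_vec 0 1 1) < 0"
    by (simp add: quad_form_matC)
qed (use assms lower_bound_imp_nonneg_on_null_cone in blast)

theorem mainTheorem1:
  fixes X :: "real ^ 'n ^ 'm" and y z :: "real ^ 'm" and \<gamma> :: real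
  assumes "\<gamma> > 0"
  shows "(INF w. ereal (objective X y z \<gamma> w))
       = (SUP \<mu> \<in> {\<mu>. \<exists>l. psd (matA X y z - \<mu> *\<^sub>R matB + l *\<^sub>R matC \<gamma>)}. ereal \<mu>)"
proof (rule antisym)
  let ?obj = "objective X y z \<gamma>"
  have "bdd_below (range ?obj)"
    by (intro bdd_belowI[of _ 0]) (auto simp: objective_def)
  then have "Inf (range ?obj) \<le> ?obj w" for w
    by (intro cInf_lower) auto
  then have "\<exists>l. psd (matA X y z - Inf (range ?obj) *\<^sub>R matB + l *\<^sub>R matC \<gamma>)"
    using assms by (intro lower_bound_imp_dual_feasible)
  moreover have "(INF w. ereal (?obj w)) = ereal (Inf (range ?obj))"
    using \<open>bdd_below (range ?obj)\<close> by (subst ereal_Inf') (auto simp: image_comp)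
  ultimately show "(INF w. ereal (?obj w))
      \<le> (SUP \<mu> \<in> {\<mu>. \<exists>l. psd (matA X y z - \<mu> *\<^sub>R matB + l *\<^sub>R matC \<gamma>)}. ereal \<mu>)"
    by (auto intro: SUP_upper)
  show "(SUP \<mu> \<in> {\<mu>. \<exists>l. psd (matA X y z - \<mu> *\<^sub>R matB + l *\<^sub>R matC \<gamma>)}. ereal \<mu>)
      \<le> (INF w. ereal (?obj w))"
    using assms by (auto intro!: SUP_least INF_greatest dual_feasible_le_objective)
qed

end
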